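(* Assume $192S\le T$. On the event $E$, for every arm $i$ and every integer $n\le 192S$, $n\,\widehat\mu_{i,n}<210c^2\log T$.
   Context: Bandit setup: $k$ arms, arm $i$ a distribution on $[0,1]$ with mean $\mu_i$, $\mu^*:=\max_i\mu_i>0$. $\log$ is the natural logarithm; $c:=3$; $T$ is the overall horizon and $S:=\frac{c^2\log T}{\mu^*}$. Canonical model: a $k\times T$ table $(Y_{i,s})$ of independent entries with $Y_{i,s}$ distributed as arm $i$, the $s$-th pull of arm $i$ yielding $Y_{i,s}$; $\widehat\mu_{i,s}:=\frac1s\sum_{r=1}^sY_{i,r}$ (and $n\widehat\mu_{i,n}:=0$ for $n=0$). Uniform sampling is modeled by independent uniform $U_1,\dots,U_T\in[k]$ (independent of the table). Events: $E_1$: for every integer $r$ with $128kS\le r\le T$ and every arm $i$, the number of $r'\le r$ with $U_{r'}=i$ is at least $\frac{r}{2k}$ and at most $\frac{3r}{2k}$. $E_2$: for every arm $i$ with $\mu_i>\frac{\mu^*}{64}$ and every integer $s$ with $64S\le s\le T$, $|\mu_i-\widehat\mu_{i,s}|\le c\sqrt{\frac{\mu_i\log T}{s}}$. $E_3$: for every arm $j$ with $\mu_j\le\frac{\mu^*}{64}$ and every integer $s$ with $64S\le s\le T$, $\widehat\mu_{j,s}<\frac{\mu^*}{32}$. $E:=E_1\cap E_2\cap E_3$. *)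

theory Defs
  imports Complex_Main
begin

text \<open>Arms are indexed by {1..k}; pulls and rounds by {1..T}.
  The reward table is Y i s (s-th pull of arm i), the uniform draws are U r.\<close>

definition cconst :: real where "cconst = 3"

definition mustar :: "nat \<Rightarrow> (nat \<Rightarrow> real) \<Rightarrow> real" where
  "mustar k \<mu> = Max (\<mu> ` {1..k})"

definition Sval :: "nat \<Rightarrow> (nat \<Rightarrow> real) \<Rightarrow> nat \<Rightarrow> real" where
  "Sval k \<mu> T = cconst\<^sup>2 * ln (real T) / mustar k \<mu>"

text \<open>Empirical mean of the first s pulls of arm i (equals 0 for s = 0, so s * muhat = 0).\<close>
definition muhat :: "(nat \<Rightarrow> nat \<Rightarrow> real) \<Rightarrow> nat \<Rightarrow> nat \<Rightarrow> real" where
  "muhat Y i s = (\<Sum>r=1..s. Y i r) / real s"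

definition E1 :: "nat \<Rightarrow> (nat \<Rightarrow> real) \<Rightarrow> nat \<Rightarrow> (nat \<Rightarrow> nat) \<Rightarrow> bool" where
  "E1 k \<mu> T U \<longleftrightarrow>
     (\<forall>r::nat. 128 * real k * Sval k \<mu> T \<le> real r \<and> r \<le> T \<longrightarrow>
        (\<forall>i\<in>{1..k}. real r / (2 * real k) \<le> real (card {r'\<in>{1..r}. U r' = i}) \<and>
                     real (card {r'\<in>{1..r}. U r' = i}) \<le> 3 * real r / (2 * real k)))"

definition E2 :: "nat \<Rightarrow> (nat \<Rightarrow> real) \<Rightarrow> nat \<Rightarrow> (nat \<Rightarrow> nat \<Rightarrow> real) \<Rightarrow> bool" where
  "E2 k \<mu> T Y \<longleftrightarrow>
     (\<forall>i\<in>{1..k}. \<mu> i > mustar k \<mu> / 64 \<longrightarrow>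
        (\<forall>s::nat. 64 * Sval k \<mu> T \<le> real s \<and> s \<le> T \<longrightarrow>
           \<bar>\<mu> i - muhat Y i s\<bar> \<le> cconst * sqrt (\<mu> i * ln (real T) / real s)))"

definition E3 :: "nat \<Rightarrow> (nat \<Rightarrow> real) \<Rightarrow> nat \<Rightarrow> (nat \<Rightarrow> nat \<Rightarrow> real) \<Rightarrow> bool" where
  "E3 k \<mu> T Y \<longleftrightarrow>
     (\<forall>j\<in>{1..k}. \<mu> j \<le> mustar k \<mu> / 64 \<longrightarrow>
        (\<forall>s::nat. 64 * Sval k \<mu> T \<le> real s \<and> s \<le> T \<longrightarrow>
           muhat Y j s < mustar k \<mu> / 32))"

definition Eevent where
  "Eevent k \<mu> T U Y \<longleftrightarrow> E1 k \<mu> T U \<and> E2 k \<mu> T Y \<and> E3 k \<mu> T Y"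

end

theory Submission
  imports Defs
begin

text \<open>The partial sum n\<cdot>muhat(i,n) of arm i's rewards is nondecreasing in n, so it suffices
  to bound it at the single sample size N = \<lfloor>192 S\<rfloor>. This N lies in [64 S, T], where E applies:
  for an arm with \<mu>_i > \<mu>*/64, E2 gives N\<cdot>muhat \<le> N\<mu>_i + c\<surd>(N\<mu>_i log T) \<le> (192 + \<surd>192) c^2 log T,
  using N\<mu>_i \<le> 192 S \<mu>* = 192 c^2 log T; for the other arms E3 gives N\<cdot>muhat < 192 S \<mu>*/32 = 6 c^2 log T.\<close>

lemma of_nat_mult_muhat: "real n * muhat Y i n = (\<Sum>r=1..n. Y i r)"
  by (cases "n = 0") (simp_all add: muhat_def)

lemma of_nat_mult_muhat_mono:
  assumes "m \<le> n" and "\<And>s. s \<in> {1..n} \<Longrightarrow> 0 \<le> Y i s"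
  shows "real m * muhat Y i m \<le> real n * muhat Y i n"
  unfolding of_nat_mult_muhat using assms by (intro sum_mono2) auto

lemma muhat_nonneg:
  assumes "\<And>s. s \<in> {1..n} \<Longrightarrow> 0 \<le> Y i s"
  shows "0 \<le> muhat Y i n"
  unfolding muhat_def using assms by (intro divide_nonneg_nonneg sum_nonneg) auto

lemma le_mustar: "i \<in> {1..k} \<Longrightarrow> \<mu> i \<le> mustar k \<mu>"
  unfolding mustar_def by (intro Max_ge) auto

lemma mustar_le_one:
  assumes "k \<ge> 1" and "\<And>i. i \<in> {1..k} \<Longrightarrow> \<mu> i \<le> 1"
  shows "mustar k \<mu> \<le> 1"
  unfolding mustar_def using assms by (subst Max_le_iff) auto

lemma le_nat_floor_triple:
  fixes x :: real
  assumes "1 \<le> 2 * x"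
  shows "x \<le> real (nat \<lfloor>3 * x\<rfloor>)"
  using real_of_int_floor_add_one_gt[of "3 * x"] assms by linarith

lemma mult_le_of_sqrt_deviation:
  fixes N \<mu> m c l :: real
  assumes "N > 0" and "\<mu> \<ge> 0" and "c \<ge> 0" and "l \<ge> 0"
    and "\<bar>\<mu> - m\<bar> \<le> c * sqrt (\<mu> * l / N)"
  shows "N * m \<le> N * \<mu> + sqrt (N * \<mu> * (c\<^sup>2 * l))"
proof -
  have "N * (c * sqrt (\<mu> * l / N)) = sqrt ((N * c)\<^sup>2) * sqrt (\<mu> * l / N)"
    using assms(1,3) by simp
  also have "\<dots> = sqrt ((N * c)\<^sup>2 * (\<mu> * l / N))"
    by (rule real_sqrt_mult[symmetric])
  also have "(N * c)\<^sup>2 * (\<mu> * l / N) = N * \<mu> * (c\<^sup>2 * l)"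
    using assms(1) by (simp add: power2_eq_square)
  finally have "N * (c * sqrt (\<mu> * l / N)) = sqrt (N * \<mu> * (c\<^sup>2 * l))"
    by simp
  moreover have "N * m \<le> N * (\<mu> + c * sqrt (\<mu> * l / N))"
    using assms(1,5) by (intro mult_left_mono) (auto simp: abs_le_iff)
  ultimately show ?thesis by (simp add: distrib_left)
qed

lemma ln_horizon_scaled_ge:
  assumes "T \<ge> 2"
  shows "cconst\<^sup>2 * ln (real T) \<ge> 9 / 2"
proof -
  have "ln (2::real) \<ge> 1 / 2"
    using ln_le_minus_one[of "1/2::real"] by (simp add: ln_div)
  moreover have "ln (real T) \<ge> ln 2" using assms by simp
  ultimately show ?thesis unfolding cconst_def by simp
qed

lemma Sval_ge_scaled_ln:
  assumes "k \<ge> 1" and "T \<ge> 2" and "mustar k \<mu> > 0"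
    and "\<And>i. i \<in> {1..k} \<Longrightarrow> \<mu> i \<le> 1"
  shows "Sval k \<mu> T \<ge> cconst\<^sup>2 * ln (real T)"
proof -
  have "mustar k \<mu> \<le> 1" using mustar_le_one assms(1,4) .
  moreover have "cconst\<^sup>2 * ln (real T) \<ge> 0" using ln_horizon_scaled_ge[OF assms(2)] by linarith
  ultimately show ?thesis
    unfolding Sval_def using assms(3) by (simp add: le_divide_eq mult_left_le)
qed

lemma Eevent_mult_muhat_bound:
  assumes E: "Eevent k \<mu> T U Y" and i: "i \<in> {1..k}"
    and mu0: "0 \<le> \<mu> i" and mustar_pos: "mustar k \<mu> > 0" and T: "T \<ge> 2"
    and Y0: "\<And>s. s \<in> {1..N} \<Longrightarrow> 0 \<le> Y i s"
    and N_lo: "64 * Sval k \<mu> T \<le> real N" and N_hi: "real N \<le> 192 * Sval k \<mu> T"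
    and NT: "N \<le> T" and N_pos: "N > 0"
  shows "real N * muhat Y i N < 210 * cconst\<^sup>2 * ln (real T)"
proof -
  define M L where "M = mustar k \<mu>" and "L = cconst\<^sup>2 * ln (real T)"
  have L: "L \<ge> 9 / 2" unfolding L_def using ln_horizon_scaled_ge[OF T] .
  have SM: "Sval k \<mu> T * M = L" unfolding Sval_def M_def L_def using mustar_pos by simp
  show ?thesis
  proof (cases "\<mu> i > M / 64")
    case True
    have "\<bar>\<mu> i - muhat Y i N\<bar> \<le> cconst * sqrt (\<mu> i * ln (real T) / real N)"
      using E True i N_lo NT unfolding Eevent_def E2_def M_def by auto
    then have dev: "real N * muhat Y i N \<le> real N * \<mu> i + sqrt (real N * \<mu> i * L)"
      unfolding L_def using N_pos mu0 T
      by (intro mult_le_of_sqrt_deviation) (auto simp: cconst_def)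
    have NL: "real N * \<mu> i \<le> 192 * L"
    proof -
      have "real N * \<mu> i \<le> 192 * Sval k \<mu> T * M"
        using N_hi le_mustar[OF i] mu0 by (intro mult_mono) (auto simp: M_def)
      then show ?thesis using SM by simp
    qed
    have "sqrt (real N * \<mu> i * L) \<le> sqrt (192 * L\<^sup>2)"
      using NL L by (intro real_sqrt_le_mono) (simp add: power2_eq_square)
    also have "\<dots> = sqrt 192 * L" using L by (simp add: real_sqrt_mult)
    also have "\<dots> < 14 * L"
      using L by (intro mult_strict_right_mono real_less_lsqrt) auto
    finally have "real N * muhat Y i N < 206 * L" using dev NL by linarith
    then show ?thesis using L unfolding L_def by simp
  next
    case False
    have small: "muhat Y i N < M / 32"
      using E False i N_lo NT unfolding Eevent_def E3_def M_def by auto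
    have "real N * muhat Y i N \<le> 192 * Sval k \<mu> T * (M / 32)"
      using N_hi small muhat_nonneg[where Y = Y and i = i, OF Y0] by (intro mult_mono) auto
    also have "\<dots> = 6 * L" using SM by (simp add: mult.commute)
    finally show ?thesis using L unfolding L_def by simp
  qed
qed

theorem lemma6:
  fixes k T :: nat and \<mu> :: "nat \<Rightarrow> real"
    and Y :: "nat \<Rightarrow> nat \<Rightarrow> real" and U :: "nat \<Rightarrow> nat"
  assumes k: "k \<ge> 1"
    and T: "T \<ge> 2"
    and mu_range: "\<And>i. i \<in> {1..k} \<Longrightarrow> 0 \<le> \<mu> i \<and> \<mu> i \<le> 1"
    and mustar_pos: "mustar k \<mu> > 0"
    and Y_range: "\<And>i s. i \<in> {1..k} \<Longrightarrow> s \<in> {1..T} \<Longrightarrow> 0 \<le> Y i s \<and> Y i s \<le> 1"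
    and U_range: "\<And>r. r \<in> {1..T} \<Longrightarrow> U r \<in> {1..k}"
    and horizon: "192 * Sval k \<mu> T \<le> real T"
    and E: "Eevent k \<mu> T U Y"
  shows "\<forall>i\<in>{1..k}. \<forall>n::nat. real n \<le> 192 * Sval k \<mu> T \<longrightarrow>
           real n * muhat Y i n < 210 * cconst\<^sup>2 * ln (real T)"
proof (intro ballI allI impI)
  fix i n assume i: "i \<in> {1..k}" and n: "real n \<le> 192 * Sval k \<mu> T"
  define S where "S = Sval k \<mu> T"
  define N where "N = nat \<lfloor>192 * S\<rfloor>"
  have S: "S \<ge> 9 / 2" unfolding S_def
    using Sval_ge_scaled_ln[OF k T mustar_pos] ln_horizon_scaled_ge[OF T] mu_range by force
  have N_lo: "64 * S \<le> real N"
    unfolding N_def using le_nat_floor_triple[of "64 * S"] S by simp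
  have N_hi: "real N \<le> 192 * S" unfolding N_def using S by linarith
  have NT: "N \<le> T" using N_hi horizon unfolding S_def by linarith
  have nN: "n \<le> N" using n unfolding N_def S_def by linarith
  have Y0: "\<And>s. s \<in> {1..N} \<Longrightarrow> 0 \<le> Y i s" using Y_range i NT by auto
  have "real n * muhat Y i n \<le> real N * muhat Y i N"
    using nN Y0 by (rule of_nat_mult_muhat_mono)
  also have "\<dots> < 210 * cconst\<^sup>2 * ln (real T)"
    using Eevent_mult_muhat_bound[OF E i _ mustar_pos T Y0] mu_range i N_lo N_hi NT S
    unfolding S_def by force
  finally show "real n * muhat Y i n < 210 * cconst\<^sup>2 * ln (real T)" .
qed

end
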